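(* Let $(r_k)_{k\in\mathbb{N}}$ be a sequence of nonnegative reals with $r_1=1$, $\sum_{k=1}^\infty r_k<\infty$, such that $r_i=0$ implies $r_j=0$ for all $j\geq i$, and suppose there is a constant $c_0>0$ with $\sum_{k=M}^\infty r_k\leq c_0/M$ for all integers $M\geq2$. Let $g:[1,\infty)\to[0,\infty)$ be a continuous, strictly decreasing function with $\sum_{i=M}^\infty r_i\leq g(M)$ for all integers $M\ge2$ and $g(s)\leq c_0/s$ for all $s\in[1,\infty)$. Fix $d\ge1$ and a discrete probability measure $\mu=\sum_{i=1}^\infty\alpha_i\delta_{y_i}$ on $[0,1]^d$ ($y_i\in[0,1]^d$, $\alpha_i\ge0$, $\sum_i\alpha_i=1$, $\alpha_1>0$) with $\alpha_k\leq r_k\alpha_1$ for all $k$. Then for every integer $N\geq2$ such that $\frac{1}{N\alpha_1}$ lies in the range of $g$, there exist points $x_1^N,\dots,x_N^N\in[0,1]^d$ such that $\nu_N=\frac1N\sum_{i=1}^N\delta_{x_i^N}$ satisfies $$\rho(\mu;\nu_N)<(6c_0+3)\,\frac{g^{-1}\!\left(\frac{1}{N\alpha_1}\right)}{N}.$$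
   Context: $\delta_y$ denotes the Dirac measure at $y$. For probability measures $\mu,\nu$ on $[0,1]^d$, the total variation distance is $\rho(\mu;\nu)=\sup_{A}|\mu(A)-\nu(A)|$, the supremum taken over all Borel sets $A\subseteq[0,1]^d$. $g^{-1}$ denotes the inverse function of $g$. *)

theory Defs
  imports "HOL-Analysis.Analysis"
begin

definition disc_meas :: "(nat \<Rightarrow> real) \<Rightarrow> (nat \<Rightarrow> 'a) \<Rightarrow> 'a set \<Rightarrow> real" where
  "disc_meas \<alpha> y A = (\<Sum>\<^sub>\<infinity>i\<in>{1..}. \<alpha> i * indicator A (y i))"

definition emp_meas :: "nat \<Rightarrow> (nat \<Rightarrow> 'a) \<Rightarrow> 'a set \<Rightarrow> real" where
  "emp_meas N x A = (1 / real N) * (\<Sum>i=1..N. indicator A (x i))"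

definition tv_dist :: "('a::euclidean_space set \<Rightarrow> real) \<Rightarrow> ('a set \<Rightarrow> real) \<Rightarrow> real" where
  "tv_dist \<mu> \<nu> = (SUP A\<in>{A. A \<in> sets borel \<and> A \<subseteq> cbox 0 One}. \<bar>\<mu> A - \<nu> A\<bar>)"

end

theory Submission
  imports Defs
begin

text \<open>
  Let \<open>s = g\<^sup>-\<^sup>1(1 / (N \<alpha>\<^sub>1))\<close> and \<open>M = max 2 \<lceil>s\<rceil>\<close>. Since \<open>g\<close> is decreasing and dominates the
  tails of \<open>r\<close>, the mass of \<open>\<mu>\<close> beyond the first \<open>M - 1\<close> atoms is at most
  \<open>\<alpha>\<^sub>1 g(M) \<le> \<alpha>\<^sub>1 g(s) = 1/N\<close>. Put \<open>\<lfloor>N \<alpha>\<^sub>i\<rfloor>\<close> points at \<open>y\<^sub>i\<close> for \<open>i < M\<close> and the remaining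
  points at \<open>y\<^sub>1\<close>. Each of the \<open>M - 1\<close> roundings and the tail costs at most \<open>1/N\<close>, and the
  discrepancy on any set is the difference of two numbers lying between \<open>0\<close> and the total
  cost, so \<open>\<rho>(\<mu>; \<nu>\<^sub>N) \<le> M/N \<le> (s + 1)/N\<close>, which is below the claimed bound as \<open>s \<ge> 1\<close>.
\<close>

lemma inj_on_strictly_decreasing:
  fixes g :: "'a::linorder \<Rightarrow> 'b::order"
  assumes "\<And>s t. a \<le> s \<Longrightarrow> s < t \<Longrightarrow> g t < g s"
  shows "inj_on g {a..}"
  by (rule inj_onI) (metis assms atLeast_iff linorder_neqE order_less_irrefl order_le_less_trans)

lemma tv_dist_le:
  assumes "\<And>A. \<bar>\<mu> A - \<nu> A\<bar> \<le> c"
  shows "tv_dist \<mu> \<nu> \<le> c"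
  unfolding tv_dist_def by (rule cSUP_least) (auto intro: assms)

lemma emp_meas_of_list:
  assumes "length L = N"
  shows "emp_meas N (\<lambda>i. L ! (i - 1)) A = (\<Sum>z\<leftarrow>L. indicator A z) / real N"
proof -
  have "(\<Sum>i=1..N. indicator A (L ! (i - 1))) = (\<Sum>i=0..<length L. (indicator A (L ! i) :: real))"
    using assms by (intro sum.reindex_bij_witness[where i="\<lambda>i. i + 1" and j="\<lambda>i. i - 1"]) auto
  then show ?thesis
    unfolding emp_meas_def by (simp add: sum_list_sum_nth)
qed

lemma sum_list_indicator_concat_replicate:
  "(\<Sum>z\<leftarrow>concat (map (\<lambda>i. replicate (n i) (y i)) xs). indicator A z)
     = (\<Sum>i\<leftarrow>xs. real (n i) * (indicator A (y i) :: real))"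
  by (induction xs) (simp_all add: sum_list_replicate)

lemma floor_rounding_error:
  fixes a :: real and N :: nat
  assumes "a \<ge> 0" and "N > 0"
  shows "0 \<le> a - real (nat \<lfloor>real N * a\<rfloor>) / real N"
    and "a - real (nat \<lfloor>real N * a\<rfloor>) / real N \<le> 1 / real N"
proof -
  let ?k = "real (nat \<lfloor>real N * a\<rfloor>)"
  have "real N * a \<ge> 0" using assms by simp
  then have "0 \<le> real N * a - ?k" "real N * a - ?k \<le> 1"
    by linarith+
  moreover have "a - ?k / real N = (real N * a - ?k) / real N"
    using assms by (simp add: field_simps)
  ultimately show "0 \<le> a - ?k / real N" and "a - ?k / real N \<le> 1 / real N"
    by (simp_all add: divide_right_mono)
qed

lemma infsum_le_scaled_infsum:
  fixes f g :: "'a \<Rightarrow> real"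
  assumes "f summable_on A" and "g summable_on A" and "\<And>k. k \<in> A \<Longrightarrow> f k \<le> g k * c"
  shows "(\<Sum>\<^sub>\<infinity>k\<in>A. f k) \<le> (\<Sum>\<^sub>\<infinity>k\<in>A. g k) * c"
proof -
  have "(\<Sum>\<^sub>\<infinity>k\<in>A. f k) \<le> (\<Sum>\<^sub>\<infinity>k\<in>A. g k * c)"
    using assms by (intro infsum_mono summable_on_cmult_left)
  also have "\<dots> = (\<Sum>\<^sub>\<infinity>k\<in>A. g k) * c"
    using assms(2) by (rule infsum_cmult_left)
  finally show ?thesis .
qed

lemma infsum_split_initial_segment:
  fixes f :: "nat \<Rightarrow> 'a::banach"
  assumes "f summable_on {1..}" and "M \<ge> 1"
  shows "(\<Sum>\<^sub>\<infinity>i\<in>{1..}. f i) = (\<Sum>i\<in>{1..<M}. f i) + (\<Sum>\<^sub>\<infinity>i\<in>{M..}. f i)"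
proof -
  have "f summable_on {M..}"
    using assms by (intro summable_on_subset_banach[OF assms(1)]) auto
  have "{1..} = {1..<M} \<union> {M..}" using \<open>M \<ge> 1\<close> by auto
  then have "(\<Sum>\<^sub>\<infinity>i\<in>{1..}. f i) = (\<Sum>\<^sub>\<infinity>i\<in>{1..<M} \<union> {M..}. f i)" by simp
  also have "\<dots> = (\<Sum>\<^sub>\<infinity>i\<in>{1..<M}. f i) + (\<Sum>\<^sub>\<infinity>i\<in>{M..}. f i)"
    by (rule infsum_Un_disjoint) (auto intro: \<open>f summable_on {M..}\<close>)
  finally show ?thesis
    by (simp only: infsum_finite finite_atLeastLessThan)
qed

lemma disc_meas_split:
  fixes \<alpha> :: "nat \<Rightarrow> real"
  assumes nonneg: "\<And>i. i \<ge> 1 \<Longrightarrow> \<alpha> i \<ge> 0" and summable: "\<alpha> summable_on {1..}"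
    and "M \<ge> 1"
  obtains t where "disc_meas \<alpha> y A = (\<Sum>i\<in>{1..<M}. \<alpha> i * indicator A (y i)) + t"
    and "0 \<le> t" and "t \<le> (\<Sum>\<^sub>\<infinity>i\<in>{M..}. \<alpha> i)"
proof
  let ?f = "\<lambda>i. \<alpha> i * indicator A (y i) :: real"
  have f_le: "0 \<le> ?f i" "?f i \<le> \<alpha> i" if "i \<ge> 1" for i
    using nonneg[OF that] by (auto simp: indicator_def)
  have "?f summable_on {1..}"
    by (rule summable_on_comparison_test[OF summable]) (use f_le in auto)
  then show "disc_meas \<alpha> y A = (\<Sum>i\<in>{1..<M}. ?f i) + (\<Sum>\<^sub>\<infinity>i\<in>{M..}. ?f i)"
    unfolding disc_meas_def using \<open>M \<ge> 1\<close> by (rule infsum_split_initial_segment)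
  show "0 \<le> (\<Sum>\<^sub>\<infinity>i\<in>{M..}. ?f i)"
    using f_le \<open>M \<ge> 1\<close> by (intro infsum_nonneg) auto
  show "(\<Sum>\<^sub>\<infinity>i\<in>{M..}. ?f i) \<le> (\<Sum>\<^sub>\<infinity>i\<in>{M..}. \<alpha> i)"
    using f_le \<open>M \<ge> 1\<close> summable_on_subset_banach[OF summable, of "{M..}"]
      summable_on_subset_banach[OF \<open>?f summable_on {1..}\<close>, of "{M..}"]
    by (intro infsum_mono) auto
qed

lemma emp_meas_with_counts:
  fixes n :: "nat \<Rightarrow> nat" and y :: "nat \<Rightarrow> 'a"
  assumes "(\<Sum>i\<in>{1..<M}. n i) \<le> N" and "M \<ge> 2"
  obtains x where "\<And>i. i \<in> {1..N} \<Longrightarrow> x i \<in> y ` {1..<M}"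
    and "\<And>A. emp_meas N x A = ((\<Sum>i\<in>{1..<M}. real (n i) * indicator A (y i))
          + real (N - (\<Sum>i\<in>{1..<M}. n i)) * indicator A (y 1)) / real N"
proof -
  define L where "L = concat (map (\<lambda>i. replicate (n i) (y i)) [1..<M])
    @ replicate (N - (\<Sum>i\<in>{1..<M}. n i)) (y 1)"
  have "length L = N"
    using assms(1) unfolding L_def
    by (simp add: length_concat map_map o_def sum_set_upt_conv_sum_list_nat[symmetric])
  show thesis
  proof (rule that[of "\<lambda>i. L ! (i - 1)"])
    fix i assume "i \<in> {1..N}"
    then have "L ! (i - 1) \<in> set L" using \<open>length L = N\<close> by auto
    then show "L ! (i - 1) \<in> y ` {1..<M}" unfolding L_def using \<open>M \<ge> 2\<close> by auto
  next
    fix A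
    show "emp_meas N (\<lambda>i. L ! (i - 1)) A = ((\<Sum>i\<in>{1..<M}. real (n i) * indicator A (y i))
            + real (N - (\<Sum>i\<in>{1..<M}. n i)) * indicator A (y 1)) / real N"
      unfolding emp_meas_of_list[OF \<open>length L = N\<close>]
      by (simp add: L_def sum_list_indicator_concat_replicate sum_list_replicate
          sum_set_upt_conv_sum_list_nat[symmetric])
  qed
qed

lemma disc_meas_quantization:
  fixes \<alpha> :: "nat \<Rightarrow> real" and y :: "nat \<Rightarrow> 'a"
  assumes nonneg: "\<And>i. i \<ge> 1 \<Longrightarrow> \<alpha> i \<ge> 0" and summable: "\<alpha> summable_on {1..}"
    and total: "(\<Sum>\<^sub>\<infinity>i\<in>{1..}. \<alpha> i) = 1"
    and "N > 0" and "M \<ge> 2" and tail: "(\<Sum>\<^sub>\<infinity>i\<in>{M..}. \<alpha> i) \<le> 1 / real N"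
  obtains x where "\<And>i. i \<in> {1..N} \<Longrightarrow> x i \<in> y ` {1..<M}"
    and "\<And>A. \<bar>disc_meas \<alpha> y A - emp_meas N x A\<bar> \<le> real M / real N"
proof -
  define F where "F = {1..<M}"
  define T where "T = (\<Sum>\<^sub>\<infinity>i\<in>{M..}. \<alpha> i)"
  define n where "n i = nat \<lfloor>real N * \<alpha> i\<rfloor>" for i
  define e where "e i = \<alpha> i - real (n i) / real N" for i
  have e: "0 \<le> e i" "e i \<le> 1 / real N" if "i \<in> F" for i
    using floor_rounding_error[OF nonneg \<open>N > 0\<close>, of i] that unfolding e_def n_def F_def by auto
  have total_split: "(\<Sum>i\<in>F. \<alpha> i) + T = 1"
    using infsum_split_initial_segment[OF summable, of M] total \<open>M \<ge> 2\<close>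
    unfolding F_def T_def by simp
  have T_nonneg: "T \<ge> 0"
    unfolding T_def using \<open>M \<ge> 2\<close> by (intro infsum_nonneg nonneg) auto
  define S where "S = (\<Sum>i\<in>F. n i)"
  have S_div: "real S / real N = (\<Sum>i\<in>F. \<alpha> i - e i)"
    unfolding S_def e_def of_nat_sum by (simp add: sum_divide_distrib)
  also have "\<dots> \<le> (\<Sum>i\<in>F. \<alpha> i)"
    using e by (intro sum_mono) auto
  finally have "real S / real N \<le> 1"
    using total_split T_nonneg by linarith
  then have "S \<le> N"
    using \<open>N > 0\<close> by (simp add: divide_le_eq_1)
  have R_div: "real (N - S) / real N = (\<Sum>i\<in>F. e i) + T"
    using \<open>S \<le> N\<close> \<open>N > 0\<close> S_div total_split
    by (simp add: of_nat_diff diff_divide_distrib sum_subtractf)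
  obtain x where x_pts: "\<And>i. i \<in> {1..N} \<Longrightarrow> x i \<in> y ` {1..<M}"
    and x_meas: "\<And>A. emp_meas N x A = ((\<Sum>i\<in>F. real (n i) * indicator A (y i))
          + real (N - S) * indicator A (y 1)) / real N"
    using emp_meas_with_counts[where n=n and y=y and M=M and N=N] \<open>S \<le> N\<close> \<open>M \<ge> 2\<close> unfolding S_def F_def by blast
  show thesis
  proof (rule that[OF x_pts])
    fix A
    let ?ind = "\<lambda>i. indicator A (y i) :: real"
    have ind: "0 \<le> ?ind i" "?ind i \<le> 1" for i by (auto simp: indicator_def)
    obtain t where disc: "disc_meas \<alpha> y A = (\<Sum>i\<in>F. \<alpha> i * ?ind i) + t"
      and "0 \<le> t" "t \<le> T"
      using disc_meas_split[OF nonneg summable, of M y A] \<open>M \<ge> 2\<close> unfolding F_def T_def by auto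
    have "emp_meas N x A = (\<Sum>i\<in>F. (\<alpha> i - e i) * ?ind i) + real (N - S) / real N * ?ind 1"
      unfolding x_meas e_def using \<open>N > 0\<close> by (simp add: add_divide_distrib sum_divide_distrib)
    then have "disc_meas \<alpha> y A - emp_meas N x A
        = ((\<Sum>i\<in>F. e i * ?ind i) + t) - ((\<Sum>i\<in>F. e i) + T) * ?ind 1"
      unfolding disc R_div by (simp add: left_diff_distrib sum_subtractf)
    moreover have "0 \<le> (\<Sum>i\<in>F. e i * ?ind i) + t"
      using e ind \<open>0 \<le> t\<close> by (intro add_nonneg_nonneg sum_nonneg) auto
    moreover have "(\<Sum>i\<in>F. e i * ?ind i) + t \<le> (\<Sum>i\<in>F. e i) + T"
      using e ind \<open>t \<le> T\<close> by (intro add_mono sum_mono) (auto intro: mult_left_le)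
    moreover have "0 \<le> ((\<Sum>i\<in>F. e i) + T) * ?ind 1"
      using e ind T_nonneg by (intro mult_nonneg_nonneg add_nonneg_nonneg sum_nonneg) auto
    moreover have "((\<Sum>i\<in>F. e i) + T) * ?ind 1 \<le> (\<Sum>i\<in>F. e i) + T"
      using e ind T_nonneg by (intro mult_right_le_one_le add_nonneg_nonneg sum_nonneg) auto
    moreover have "(\<Sum>i\<in>F. e i) + T \<le> (\<Sum>i\<in>F. 1 / real N) + 1 / real N"
      using e tail unfolding T_def by (intro add_mono sum_mono) auto
    moreover have "(\<Sum>i\<in>F. 1 / real N) + 1 / real N = real M / real N"
      unfolding F_def using \<open>M \<ge> 2\<close> by (simp add: of_nat_diff diff_divide_distrib)
    ultimately show "\<bar>disc_meas \<alpha> y A - emp_meas N x A\<bar> \<le> real M / real N"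
      by linarith
  qed
qed

theorem theorem2p3:
  fixes r :: "nat \<Rightarrow> real" and g :: "real \<Rightarrow> real" and c0 :: real
    and \<alpha> :: "nat \<Rightarrow> real" and y :: "nat \<Rightarrow> 'a::euclidean_space" and N :: nat
  assumes r_nonneg: "\<And>k. k \<ge> 1 \<Longrightarrow> r k \<ge> 0"
    and r1: "r 1 = 1"
    and r_summable: "r summable_on {1..}"
    and r_zero: "\<And>i j. 1 \<le> i \<Longrightarrow> i \<le> j \<Longrightarrow> r i = 0 \<Longrightarrow> r j = 0"
    and c0_pos: "c0 > 0"
    and r_tail: "\<And>M. M \<ge> 2 \<Longrightarrow> (\<Sum>\<^sub>\<infinity>k\<in>{M..}. r k) \<le> c0 / real M"
    and g_cont: "continuous_on {1..} g"
    and g_nonneg: "\<And>s. s \<ge> 1 \<Longrightarrow> g s \<ge> 0"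
    and g_strict_dec: "\<And>s t. 1 \<le> s \<Longrightarrow> s < t \<Longrightarrow> g t < g s"
    and g_tail: "\<And>M. M \<ge> 2 \<Longrightarrow> (\<Sum>\<^sub>\<infinity>i\<in>{M..}. r i) \<le> g (real M)"
    and g_bound: "\<And>s. s \<ge> 1 \<Longrightarrow> g s \<le> c0 / s"
    and y_cube: "\<And>i. i \<ge> 1 \<Longrightarrow> y i \<in> cbox 0 One"
    and \<alpha>_nonneg: "\<And>i. i \<ge> 1 \<Longrightarrow> \<alpha> i \<ge> 0"
    and \<alpha>_summable: "\<alpha> summable_on {1..}"
    and \<alpha>_sum: "(\<Sum>\<^sub>\<infinity>i\<in>{1..}. \<alpha> i) = 1"
    and \<alpha>1_pos: "\<alpha> 1 > 0"
    and \<alpha>_le: "\<And>k. k \<ge> 1 \<Longrightarrow> \<alpha> k \<le> r k * \<alpha> 1"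
    and N2: "N \<ge> 2"
    and in_range: "1 / (real N * \<alpha> 1) \<in> g ` {1..}"
  shows "\<exists>x :: nat \<Rightarrow> 'a. (\<forall>i\<in>{1..N}. x i \<in> cbox 0 One) \<and>
    tv_dist (disc_meas \<alpha> y) (emp_meas N x)
      < (6 * c0 + 3) * the_inv_into {1..} g (1 / (real N * \<alpha> 1)) / real N"
proof -
  define v where "v = 1 / (real N * \<alpha> 1)"
  have "inj_on g {1..}"
    using g_strict_dec by (rule inj_on_strictly_decreasing)
  define s where "s = the_inv_into {1..} g v"
  have "s \<ge> 1" and "g s = v"
    using the_inv_into_into[OF \<open>inj_on g {1..}\<close>, of v] f_the_inv_into_f[OF \<open>inj_on g {1..}\<close>, of v]
      in_range unfolding s_def v_def by auto
  define M where "M = nat (max 2 \<lceil>s\<rceil>)"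
  have "M \<ge> 2" and "s \<le> real M" and "real M \<le> s + 1"
    unfolding M_def using \<open>s \<ge> 1\<close> by linarith+
  have "(\<Sum>\<^sub>\<infinity>i\<in>{M..}. \<alpha> i) \<le> (\<Sum>\<^sub>\<infinity>i\<in>{M..}. r i) * \<alpha> 1"
    using \<open>M \<ge> 2\<close> summable_on_subset_banach[OF \<alpha>_summable, of "{M..}"]
      summable_on_subset_banach[OF r_summable, of "{M..}"]
    by (intro infsum_le_scaled_infsum \<alpha>_le) auto
  also have "\<dots> \<le> g (real M) * \<alpha> 1"
    using g_tail[OF \<open>M \<ge> 2\<close>] \<alpha>1_pos by simp
  also have "\<dots> \<le> g s * \<alpha> 1"
    using g_strict_dec[OF \<open>s \<ge> 1\<close>, of "real M"] \<open>s \<le> real M\<close> \<alpha>1_pos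
    by (cases "s = real M") auto
  also have "\<dots> = 1 / real N"
    unfolding \<open>g s = v\<close> v_def using \<alpha>1_pos by simp
  finally obtain x where x_pts: "\<And>i. i \<in> {1..N} \<Longrightarrow> x i \<in> y ` {1..<M}"
    and x_close: "\<And>A. \<bar>disc_meas \<alpha> y A - emp_meas N x A\<bar> \<le> real M / real N"
    using disc_meas_quantization[where N=N and y=y, OF \<alpha>_nonneg \<alpha>_summable \<alpha>_sum _ \<open>M \<ge> 2\<close>] N2 by auto
  have "\<forall>i\<in>{1..N}. x i \<in> cbox 0 One"
    using x_pts y_cube by fastforce
  moreover have "tv_dist (disc_meas \<alpha> y) (emp_meas N x) \<le> real M / real N"
    by (rule tv_dist_le) (rule x_close)
  moreover have "real M / real N < (6 * c0 + 3) * s / real N"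
  proof (rule divide_strict_right_mono)
    have "0 < c0 * s" using c0_pos \<open>s \<ge> 1\<close> by simp
    then show "real M < (6 * c0 + 3) * s" using \<open>real M \<le> s + 1\<close> \<open>s \<ge> 1\<close> by argo
  qed (use N2 in simp)
  ultimately show ?thesis
    unfolding s_def v_def by fastforce
qed

end
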